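(* There is a first-order formula $\Psi_{\mathrm{tran}}(x,y)$ in the language $\{\le,[1]+[1]\}$ such that for all $\sigma,\pi\in\mathcal P$, $$\mathbf Y^*\models\Psi_{\mathrm{tran}}(\sigma,\pi)\iff \pi=[\#\sigma].$$
   Context: $\mathcal P$ is the set of all integer partitions, including the empty partition $\emptyset$; a partition is a nonincreasing finite sequence of positive integers (its parts). $[n]$ denotes the partition with a single part $n$ (with $[0]=\emptyset$), and $m[n]$ the partition with exactly $m$ parts equal to $n$. Every nonempty partition has a unique canonical representation $\sigma=\sum_{i=1}^k m_i[n_i]$ with $n_1>\dots>n_k\ge1$, meaning part $n_i$ occurs exactly $m_i\ge1$ times. Let $p_1=2,p_2=3,p_3=5,\dots$ enumerate the primes. Define $\#:\mathcal P\to\mathbb N$ by $\#\emptyset=0$; $\#(m[1])=p_1^{m-1}$ for $m\ge1$; and $\#\sigma=\prod_{i=1}^k p_{n_i}^{m_i}$ if $\sigma=\sum_{i=1}^k m_i[n_i]$ has some part $n_i\ne1$. (This is a bijection.) Young's lattice $\mathbf Y=\langle\mathcal P,\le\rangle$ has $(s_1,\dots,s_r)\le(n_1,\dots,n_t)$ iff $r\le t$ and $s_i\le n_i$ for all $i\le r$; $\mathbf Y^*$ is $\mathbf Y$ with a constant symbol interpreted as the partition $[1]+[1]=(1,1)$. *)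

theory Defs
  imports "HOL-Computational_Algebra.Primes" "HOL-Library.Infinite_Set"
begin

definition is_partition :: "nat list \<Rightarrow> bool" where
  "is_partition xs \<longleftrightarrow> sorted_wrt (\<ge>) xs \<and> (\<forall>x\<in>set xs. 0 < x)"

definition single_part :: "nat \<Rightarrow> nat list" where
  "single_part n = (if n = 0 then [] else [n])"

text \<open>The n-th prime, 1-indexed: p_1 = 2, p_2 = 3, ...\<close>
definition nth_prime :: "nat \<Rightarrow> nat" where
  "nth_prime n = enumerate {p::nat. prime p} (n - 1)"

definition code :: "nat list \<Rightarrow> nat" where
  "code \<sigma> = (if \<sigma> = [] then 0
             else if (\<forall>x\<in>set \<sigma>. x = 1) then 2 ^ (length \<sigma> - 1)
             else prod_list (map nth_prime \<sigma>))"

definition young_le :: "nat list \<Rightarrow> nat list \<Rightarrow> bool" where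
  "young_le s n \<longleftrightarrow> length s \<le> length n \<and> (\<forall>i<length s. s ! i \<le> n ! i)"

text \<open>First-order logic over the language {\<le>, c} with equality,
  where the constant c is interpreted as [1]+[1] = (1,1).\<close>
datatype tm = Var nat | Const

datatype fm = Le tm tm | Eq tm tm | FFalse | Neg fm | Conj fm fm | Disj fm fm
  | Imp fm fm | Ex nat fm | All nat fm

fun tm_fv :: "tm \<Rightarrow> nat set" where
  "tm_fv (Var v) = {v}"
| "tm_fv Const = {}"

fun fv :: "fm \<Rightarrow> nat set" where
  "fv (Le s t) = tm_fv s \<union> tm_fv t"
| "fv (Eq s t) = tm_fv s \<union> tm_fv t"
| "fv FFalse = {}"
| "fv (Neg \<phi>) = fv \<phi>"
| "fv (Conj \<phi> \<psi>) = fv \<phi> \<union> fv \<psi>"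
| "fv (Disj \<phi> \<psi>) = fv \<phi> \<union> fv \<psi>"
| "fv (Imp \<phi> \<psi>) = fv \<phi> \<union> fv \<psi>"
| "fv (Ex x \<phi>) = fv \<phi> - {x}"
| "fv (All x \<phi>) = fv \<phi> - {x}"

fun tm_eval :: "(nat \<Rightarrow> nat list) \<Rightarrow> tm \<Rightarrow> nat list" where
  "tm_eval e (Var v) = e v"
| "tm_eval e Const = [1, 1]"

fun sat :: "(nat \<Rightarrow> nat list) \<Rightarrow> fm \<Rightarrow> bool" where
  "sat e (Le s t) = young_le (tm_eval e s) (tm_eval e t)"
| "sat e (Eq s t) = (tm_eval e s = tm_eval e t)"
| "sat e FFalse = False"
| "sat e (Neg \<phi>) = (\<not> sat e \<phi>)"
| "sat e (Conj \<phi> \<psi>) = (sat e \<phi> \<and> sat e \<psi>)"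
| "sat e (Disj \<phi> \<psi>) = (sat e \<phi> \<or> sat e \<psi>)"
| "sat e (Imp \<phi> \<psi>) = (sat e \<phi> \<longrightarrow> sat e \<psi>)"
| "sat e (Ex x \<phi>) = (\<exists>\<sigma>. is_partition \<sigma> \<and> sat (e(x := \<sigma>)) \<phi>)"
| "sat e (All x \<phi>) = (\<forall>\<sigma>. is_partition \<sigma> \<longrightarrow> sat (e(x := \<sigma>)) \<phi>)"

end

theory Submission
  imports Defs
begin

text \<open>
  In Young's lattice the partitions not above (1,1) are the rows [n], forming a copy of
  (\<nat>, \<le>), and the partitions all of whose rows lie below [1] are the columns 1^n, forming
  another copy. The i-th part of \<sigma> is definable as the largest n such that the rectangle
  n^i lies below \<sigma>; hence a partition of length L encodes a nonincreasing sequence of L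
  numbers, and any definable monotone recurrence x_j = f j x_(j+1) can be run along it. This
  defines addition and multiplication on rows, hence primality; a partition listing exactly
  the primes below q defines the n-th prime; and a last recurrence along \<sigma> computes
  p_(\<sigma>_1) \<dots> p_(\<sigma>_k), or 2^(k-1) if \<sigma> is a column.
\<close>

lemma young_le_Nil [simp]: "young_le [] y" "young_le x [] \<longleftrightarrow> x = []"
  by (auto simp: young_le_def)

lemma partition_pos: "is_partition x \<Longrightarrow> i < length x \<Longrightarrow> 0 < x ! i"
  by (simp add: is_partition_def)

lemma partition_antimono: "is_partition x \<Longrightarrow> i \<le> j \<Longrightarrow> j < length x \<Longrightarrow> x ! j \<le> x ! i"
  unfolding is_partition_def by (metis antisym_conv1 order_refl sorted_wrt_nth_less)

lemma partition_le_hd: "is_partition x \<Longrightarrow> a \<in> set x \<Longrightarrow> a \<le> hd x"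
  by (metis hd_conv_nth in_set_conv_nth le0 length_greater_0_conv list.size(3)
      not_less0 partition_antimono)

lemma young_le_trans: "young_le x y \<Longrightarrow> young_le y z \<Longrightarrow> young_le x z"
  unfolding young_le_def by (meson le_trans less_le_trans order.strict_trans2)

lemma young_le_replicate:
  "length y \<le> i \<Longrightarrow> \<forall>a\<in>set y. a \<le> k \<Longrightarrow> young_le y (replicate i k)"
  by (auto simp: young_le_def)

lemma is_partition_Nil [simp]: "is_partition []"
  by (simp add: is_partition_def)

lemma is_partition_unit [simp]: "is_partition [Suc 0]"
  by (simp add: is_partition_def)

lemma is_partition_single_part [simp]: "is_partition (single_part n)"
  by (simp add: is_partition_def single_part_def)

lemma is_partition_replicate: "0 < k \<Longrightarrow> is_partition (replicate n k)"
  by (simp add: is_partition_def sorted_wrt_iff_nth_less)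

lemma is_partition_column [simp]: "is_partition (replicate n (Suc 0))"
  by (simp add: is_partition_replicate)

lemma is_partition_Cons_column [simp]: "is_partition (Suc 0 # replicate n (Suc 0))"
  using is_partition_column[of "Suc n"] by simp

lemma single_part_eq_Nil [simp]: "single_part n = [] \<longleftrightarrow> n = 0"
  by (simp add: single_part_def)

definition is_row :: "nat list \<Rightarrow> bool" where
  "is_row x \<longleftrightarrow> length x \<le> 1"

definition row_value :: "nat list \<Rightarrow> nat" where
  "row_value x = sum_list x"

definition is_column :: "nat list \<Rightarrow> bool" where
  "is_column x \<longleftrightarrow> (\<forall>a\<in>set x. a = 1)"

lemma single_part_row [simp]: "is_row (single_part n)" "row_value (single_part n) = n"
  by (auto simp: is_row_def row_value_def single_part_def)

lemma singleton_row [simp]: "is_row [x]" "row_value [x] = x"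
  by (auto simp: is_row_def row_value_def)

lemma row_eq_single_part: "is_partition x \<Longrightarrow> is_row x \<Longrightarrow> x = single_part (row_value x)"
  unfolding is_row_def row_value_def single_part_def is_partition_def by (cases x) auto

lemma rows_eq_iff:
  "is_partition x \<Longrightarrow> is_row x \<Longrightarrow> is_partition y \<Longrightarrow> is_row y \<Longrightarrow>
    x = y \<longleftrightarrow> row_value x = row_value y"
  by (metis row_eq_single_part)

lemma young_le_rows:
  "is_partition x \<Longrightarrow> is_row x \<Longrightarrow> is_partition y \<Longrightarrow> is_row y \<Longrightarrow>
    young_le x y \<longleftrightarrow> row_value x \<le> row_value y"
  unfolding is_row_def row_value_def is_partition_def young_le_def by (cases x; cases y) auto

lemma single_part_young_le_row [simp]:
  "is_partition y \<Longrightarrow> is_row y \<Longrightarrow> young_le (single_part m) y \<longleftrightarrow> m \<le> row_value y"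
  by (metis is_partition_single_part single_part_row young_le_rows)

lemma young_le_single_part:
  "is_partition y \<Longrightarrow> young_le (single_part m) y \<longleftrightarrow> m = 0 \<or> (y \<noteq> [] \<and> m \<le> hd y)"
  by (cases y) (auto simp: young_le_def single_part_def)

lemma is_column_replicate [simp]: "is_column (replicate n (Suc 0))"
  by (simp add: is_column_def)

lemma column_eq_replicate: "is_column x \<Longrightarrow> x = replicate (length x) (Suc 0)"
  unfolding is_column_def by (simp add: replicate_length_same)

lemma columns_eq_iff: "is_column x \<Longrightarrow> is_column y \<Longrightarrow> x = y \<longleftrightarrow> length x = length y"
  by (metis column_eq_replicate)

lemma column_young_le [simp]:
  "is_partition y \<Longrightarrow> young_le (replicate j (Suc 0)) y \<longleftrightarrow> j \<le> length y"
  unfolding young_le_def using partition_pos by (auto simp: Suc_le_eq)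

lemma young_le_columns:
  "is_column x \<Longrightarrow> is_partition y \<Longrightarrow> young_le x y \<longleftrightarrow> length x \<le> length y"
  by (metis column_eq_replicate column_young_le length_replicate)

lemma all_rows_iff: "(\<forall>s. is_partition s \<longrightarrow> is_row s \<longrightarrow> P s) \<longleftrightarrow> (\<forall>n. P (single_part n))"
  by (metis row_eq_single_part is_partition_single_part single_part_row(1))

lemma ex_rows_iff: "(\<exists>s. is_partition s \<and> is_row s \<and> P s) \<longleftrightarrow> (\<exists>n. P (single_part n))"
  by (metis row_eq_single_part is_partition_single_part single_part_row(1))

lemma all_columns_iff:
  "(\<forall>s. is_partition s \<longrightarrow> is_column s \<longrightarrow> P s) \<longleftrightarrow> (\<forall>n. P (replicate n (Suc 0)))"
  by (metis column_eq_replicate is_partition_column is_column_replicate)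

lemma ex_columns_iff:
  "(\<exists>s. is_partition s \<and> is_column s \<and> P s) \<longleftrightarrow> (\<exists>n. P (replicate n (Suc 0)))"
  by (metis column_eq_replicate is_partition_column is_column_replicate)

text \<open>
  Each formula builder takes the indices of its free variables and, as last argument, an
  index b such that it only binds variables b, b+1, \<dots>; its semantics is stated for free
  variables below b.
\<close>

definition partition_env :: "(nat \<Rightarrow> nat list) \<Rightarrow> bool" where
  "partition_env e \<longleftrightarrow> (\<forall>v. is_partition (e v))"

lemma partition_env_upd [simp]:
  "partition_env e \<Longrightarrow> is_partition s \<Longrightarrow> partition_env (e(b := s))"
  by (simp add: partition_env_def)

lemma partition_envD [simp]: "partition_env e \<Longrightarrow> is_partition (e v)"
  by (simp add: partition_env_def)

definition empty_fm :: "nat \<Rightarrow> nat \<Rightarrow> fm" where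
  "empty_fm x b = All b (Le (Var x) (Var b))"

definition unit_fm :: "nat \<Rightarrow> nat \<Rightarrow> fm" where
  "unit_fm x b = Conj (Neg (empty_fm x b))
     (All b (Imp (Le (Var b) (Var x)) (Disj (Eq (Var b) (Var x)) (empty_fm b (Suc b)))))"

definition row_fm :: "nat \<Rightarrow> fm" where
  "row_fm x = Neg (Le Const (Var x))"

definition iff_fm :: "fm \<Rightarrow> fm \<Rightarrow> fm" where
  "iff_fm \<phi> \<psi> = Conj (Imp \<phi> \<psi>) (Imp \<psi> \<phi>)"

definition less_fm :: "nat \<Rightarrow> nat \<Rightarrow> fm" where
  "less_fm u v = Conj (Le (Var u) (Var v)) (Neg (Eq (Var u) (Var v)))"

lemma sat_iff_fm [simp]: "sat e (iff_fm \<phi> \<psi>) \<longleftrightarrow> (sat e \<phi> \<longleftrightarrow> sat e \<psi>)"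
  by (auto simp: iff_fm_def)

lemma sat_less_fm [simp]: "sat e (less_fm u v) \<longleftrightarrow> young_le (e u) (e v) \<and> e u \<noteq> e v"
  by (simp add: less_fm_def)

lemma sat_empty_fm [simp]:
  "partition_env e \<Longrightarrow> x < b \<Longrightarrow> sat e (empty_fm x b) \<longleftrightarrow> e x = []"
  by (auto simp: empty_fm_def dest: spec[of _ "[]"])

lemma sat_unit_fm [simp]:
  assumes e: "partition_env e" and "x < b"
  shows "sat e (unit_fm x b) \<longleftrightarrow> e x = [1]"
proof -
  have p: "is_partition (e x)" using e by simp
  have "sat e (unit_fm x b) \<longleftrightarrow>
      e x \<noteq> [] \<and> (\<forall>s. is_partition s \<longrightarrow> young_le s (e x) \<longrightarrow> s = e x \<or> s = [])"
    using assms by (simp add: unit_fm_def)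
  also have "\<dots> \<longleftrightarrow> e x = [1]"
  proof
    assume atom: "e x \<noteq> [] \<and> (\<forall>s. is_partition s \<longrightarrow> young_le s (e x) \<longrightarrow> s = e x \<or> s = [])"
    then have "0 < hd (e x)" using p by (auto simp: is_partition_def)
    then have "young_le (single_part 1) (e x)" using atom young_le_single_part[OF p] by simp
    then show "e x = [1]"
      using spec[OF atom[THEN conjunct2], of "single_part 1"] by (simp add: single_part_def)
  next
    assume "e x = [1]"
    moreover have "s = [1] \<or> s = []" if "is_partition s" "young_le s [1]" for s
      using that by (cases s) (auto simp: young_le_def is_partition_def)
    ultimately show "e x \<noteq> [] \<and> (\<forall>s. is_partition s \<longrightarrow> young_le s (e x) \<longrightarrow> s = e x \<or> s = [])"
      by simp
  qed
  finally show ?thesis .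
qed

lemma sat_row_fm [simp]:
  assumes "partition_env e"
  shows "sat e (row_fm x) \<longleftrightarrow> is_row (e x)"
proof -
  have "0 < e x ! 0 \<and> 0 < e x ! 1" if "2 \<le> length (e x)"
    using that assms by (auto intro!: partition_pos)
  then have "young_le [1, 1] (e x) \<longleftrightarrow> 2 \<le> length (e x)"
    by (auto simp: young_le_def less_Suc_eq Suc_le_eq)
  then show ?thesis by (auto simp: row_fm_def is_row_def)
qed

definition All_row :: "nat \<Rightarrow> fm \<Rightarrow> fm" where
  "All_row b \<phi> = All b (Imp (row_fm b) \<phi>)"

definition Ex_row :: "nat \<Rightarrow> fm \<Rightarrow> fm" where
  "Ex_row b \<phi> = Ex b (Conj (row_fm b) \<phi>)"

lemma sat_All_row [simp]:
  "partition_env e \<Longrightarrow> sat e (All_row b \<phi>) \<longleftrightarrow> (\<forall>n. sat (e(b := single_part n)) \<phi>)"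
  using all_rows_iff[of "\<lambda>s. sat (e(b := s)) \<phi>"] by (simp add: All_row_def)

lemma sat_Ex_row [simp]:
  "partition_env e \<Longrightarrow> sat e (Ex_row b \<phi>) \<longleftrightarrow> (\<exists>n. sat (e(b := single_part n)) \<phi>)"
  using ex_rows_iff[of "\<lambda>s. sat (e(b := s)) \<phi>"] by (simp add: Ex_row_def cong: conj_cong)

definition column_fm :: "nat \<Rightarrow> nat \<Rightarrow> fm" where
  "column_fm x b =
     All_row b (Imp (Le (Var b) (Var x)) (Disj (empty_fm b (Suc b)) (unit_fm b (Suc b))))"

lemma is_column_iff_hd_le_one: "is_partition x \<Longrightarrow> is_column x \<longleftrightarrow> x = [] \<or> hd x \<le> 1"
  by (cases x) (fastforce simp: is_column_def is_partition_def)+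

lemma sat_column_fm [simp]:
  assumes e: "partition_env e" and "x < b"
  shows "sat e (column_fm x b) \<longleftrightarrow> is_column (e x)"
proof -
  have p: "is_partition (e x)" using e by simp
  have "single_part n = [] \<or> single_part n = [1] \<longleftrightarrow> n \<le> 1" for n
    by (auto simp: single_part_def)
  then have "sat e (column_fm x b) \<longleftrightarrow> (\<forall>n. young_le (single_part n) (e x) \<longrightarrow> n \<le> 1)"
    using assms by (simp add: column_fm_def)
  also have "\<dots> \<longleftrightarrow> (\<forall>n. n = 0 \<or> (e x \<noteq> [] \<and> n \<le> hd (e x)) \<longrightarrow> n \<le> 1)"
    by (simp only: young_le_single_part[OF p])
  also have "\<dots> \<longleftrightarrow> e x = [] \<or> hd (e x) \<le> 1"
    by (auto dest: spec[of _ "hd (e x)"])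
  finally show ?thesis using is_column_iff_hd_le_one[OF p] by simp
qed

definition All_column :: "nat \<Rightarrow> fm \<Rightarrow> fm" where
  "All_column b \<phi> = All b (Imp (column_fm b (Suc b)) \<phi>)"

definition Ex_column :: "nat \<Rightarrow> fm \<Rightarrow> fm" where
  "Ex_column b \<phi> = Ex b (Conj (column_fm b (Suc b)) \<phi>)"

lemma sat_All_column [simp]:
  "partition_env e \<Longrightarrow> sat e (All_column b \<phi>) \<longleftrightarrow> (\<forall>n. sat (e(b := replicate n (Suc 0))) \<phi>)"
  using all_columns_iff[of "\<lambda>s. sat (e(b := s)) \<phi>"] by (simp add: All_column_def)

lemma sat_Ex_column [simp]:
  "partition_env e \<Longrightarrow> sat e (Ex_column b \<phi>) \<longleftrightarrow> (\<exists>n. sat (e(b := replicate n (Suc 0))) \<phi>)"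
  using ex_columns_iff[of "\<lambda>s. sat (e(b := s)) \<phi>"] by (simp add: Ex_column_def cong: conj_cong)

subsection \<open>Lengths, parts and rectangles\<close>

definition row_succ_fm :: "nat \<Rightarrow> nat \<Rightarrow> nat \<Rightarrow> fm" where
  "row_succ_fm u v b =
     Conj (less_fm u v) (All_row b (Disj (Le (Var b) (Var u)) (Le (Var v) (Var b))))"

lemma sat_row_succ_fm [simp]:
  assumes "partition_env e" "u < b" "v < b" "is_row (e u)" "is_row (e v)"
  shows "sat e (row_succ_fm u v b) \<longleftrightarrow> row_value (e v) = Suc (row_value (e u))"
proof -
  have "sat e (row_succ_fm u v b) \<longleftrightarrow> row_value (e u) < row_value (e v) \<and>
      (\<forall>n. n \<le> row_value (e u) \<or> row_value (e v) \<le> n)"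
    using assms by (auto simp: row_succ_fm_def young_le_rows rows_eq_iff)
  then show ?thesis by (auto dest: spec[of _ "Suc (row_value (e u))"])
qed

definition column_succ_fm :: "nat \<Rightarrow> nat \<Rightarrow> nat \<Rightarrow> fm" where
  "column_succ_fm i j b = Conj (column_fm i b) (Conj (column_fm j b) (Conj (less_fm i j)
     (All_column b (Disj (Le (Var b) (Var i)) (Le (Var j) (Var b))))))"

lemma sat_column_succ_fm [simp]:
  assumes "partition_env e" "i < b" "j < b"
  shows "sat e (column_succ_fm i j b) \<longleftrightarrow>
    is_column (e i) \<and> is_column (e j) \<and> length (e j) = Suc (length (e i))"
proof -
  have "sat e (column_succ_fm i j b) \<longleftrightarrow> is_column (e i) \<and> is_column (e j) \<and>
      length (e i) < length (e j) \<and> (\<forall>n. n \<le> length (e i) \<or> length (e j) \<le> n)"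
    using assms by (auto simp: column_succ_fm_def young_le_columns columns_eq_iff)
  then show ?thesis by (auto dest: spec[of _ "Suc (length (e i))"])
qed

definition length_le_fm :: "nat \<Rightarrow> nat \<Rightarrow> nat \<Rightarrow> fm" where
  "length_le_fm y c b = All_column b (Imp (Le (Var b) (Var y)) (Le (Var b) (Var c)))"

lemma sat_length_le_fm [simp]:
  assumes "partition_env e" "y < b" "c < b"
  shows "sat e (length_le_fm y c b) \<longleftrightarrow> length (e y) \<le> length (e c)"
  using assms by (auto simp: length_le_fm_def dest: spec[of _ "length (e y)"])

definition length_eq_fm :: "nat \<Rightarrow> nat \<Rightarrow> nat \<Rightarrow> fm" where
  "length_eq_fm x c b = All_column b (iff_fm (Le (Var b) (Var x)) (Le (Var b) (Var c)))"

lemma sat_length_eq_fm [simp]: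
  assumes "partition_env e" "x < b" "c < b"
  shows "sat e (length_eq_fm x c b) \<longleftrightarrow> length (e x) = length (e c)"
  using assms by (auto simp: length_eq_fm_def intro: le_antisym dest: spec[of _ "length (e x)"]
      spec[of _ "length (e c)"])

definition parts_le_fm :: "nat \<Rightarrow> nat \<Rightarrow> nat \<Rightarrow> fm" where
  "parts_le_fm y r b = All_row b (Imp (Le (Var b) (Var y)) (Le (Var b) (Var r)))"

lemma sat_parts_le_fm [simp]:
  assumes e: "partition_env e" and "y < b" "r < b" "is_row (e r)"
  shows "sat e (parts_le_fm y r b) \<longleftrightarrow> (\<forall>a\<in>set (e y). a \<le> row_value (e r))"
proof -
  have p: "is_partition (e y)" using e by simp
  have "sat e (parts_le_fm y r b) \<longleftrightarrow>
      (\<forall>n. n = 0 \<or> (e y \<noteq> [] \<and> n \<le> hd (e y)) \<longrightarrow> n \<le> row_value (e r))"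
    using assms by (simp add: parts_le_fm_def young_le_single_part[OF p])
  also have "\<dots> \<longleftrightarrow> e y = [] \<or> hd (e y) \<le> row_value (e r)"
    by (auto dest: spec[of _ "hd (e y)"])
  also have "\<dots> \<longleftrightarrow> (\<forall>a\<in>set (e y). a \<le> row_value (e r))"
  proof
    assume hd: "e y = [] \<or> hd (e y) \<le> row_value (e r)"
    show "\<forall>a\<in>set (e y). a \<le> row_value (e r)"
    proof
      fix a assume "a \<in> set (e y)"
      then show "a \<le> row_value (e r)" using hd partition_le_hd[OF p] by force
    qed
  qed (cases "e y"; simp)
  finally show ?thesis .
qed

text \<open>The parts are numbered from 1, and the parts beyond the length are 0.\<close>

definition nth_part :: "nat list \<Rightarrow> nat \<Rightarrow> nat" where
  "nth_part x i = (if 1 \<le> i \<and> i \<le> length x then x ! (i - 1) else 0)"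

lemma replicate_young_le_iff:
  assumes s: "is_partition s" and "0 < i" "0 < k"
  shows "young_le (replicate i k) s \<longleftrightarrow> k \<le> nth_part s i"
proof
  assume "young_le (replicate i k) s"
  then show "k \<le> nth_part s i"
    using assms by (auto simp: young_le_def nth_part_def)
next
  assume "k \<le> nth_part s i"
  then have i: "i \<le> length s" and k: "k \<le> s ! (i - 1)"
    using assms by (auto simp: nth_part_def split: if_splits)
  have "k \<le> s ! j" if "j < i" for j
  proof -
    have "j \<le> i - 1" "i - 1 < length s" using that i assms(2) by auto
    then have "s ! (i - 1) \<le> s ! j" by (rule partition_antimono[OF s])
    then show ?thesis using k by simp
  qed
  then show "young_le (replicate i k) s"
    using i by (simp add: young_le_def)
qed

text \<open>The rectangle k^i is the largest partition with at most i parts, each at most k.\<close>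

lemma rectangle_le_iff:
  assumes s: "is_partition s"
  shows "(\<forall>y. is_partition y \<longrightarrow> length y \<le> i \<and> (\<forall>a\<in>set y. a \<le> k) \<longrightarrow> young_le y s)
     \<longleftrightarrow> i = 0 \<or> k \<le> nth_part s i"
proof (cases "i = 0 \<or> k = 0")
  case True
  have "young_le y s" if "is_partition y" "length y \<le> i" "\<forall>a\<in>set y. a \<le> k" for y
  proof -
    have "y = []" using that True by (cases y) (auto simp: is_partition_def)
    then show ?thesis by simp
  qed
  then show ?thesis using True by auto
next
  case False
  then have rectangle: "young_le (replicate i k) s \<longleftrightarrow> k \<le> nth_part s i"
    using replicate_young_le_iff[OF s] by simp
  show ?thesis
  proof
    assume "\<forall>y. is_partition y \<longrightarrow> length y \<le> i \<and> (\<forall>a\<in>set y. a \<le> k) \<longrightarrow> young_le y s"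
    then show "i = 0 \<or> k \<le> nth_part s i"
      using rectangle is_partition_replicate[of k i] False by simp
  next
    assume "i = 0 \<or> k \<le> nth_part s i"
    then have rect_le: "young_le (replicate i k) s" using rectangle False by simp
    show "\<forall>y. is_partition y \<longrightarrow> length y \<le> i \<and> (\<forall>a\<in>set y. a \<le> k) \<longrightarrow> young_le y s"
    proof (intro allI impI)
      fix y assume "is_partition y" "length y \<le> i \<and> (\<forall>a\<in>set y. a \<le> k)"
      then have "young_le y (replicate i k)" by (simp add: young_le_replicate)
      then show "young_le y s" using rect_le by (rule young_le_trans)
    qed
  qed
qed

definition rectangle_le_fm :: "nat \<Rightarrow> nat \<Rightarrow> nat \<Rightarrow> nat \<Rightarrow> fm" where
  "rectangle_le_fm s c r b =
     All b (Imp (Conj (length_le_fm b c (Suc b)) (parts_le_fm b r (Suc b))) (Le (Var b) (Var s)))"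

lemma sat_rectangle_le_fm [simp]:
  assumes "partition_env e" "s < b" "c < b" "r < b" "is_row (e r)"
  shows "sat e (rectangle_le_fm s c r b) \<longleftrightarrow>
    length (e c) = 0 \<or> row_value (e r) \<le> nth_part (e s) (length (e c))"
  using assms by (simp add: rectangle_le_fm_def rectangle_le_iff)

definition nth_part_fm :: "nat \<Rightarrow> nat \<Rightarrow> nat \<Rightarrow> nat \<Rightarrow> fm" where
  "nth_part_fm s c r b =
     Conj (row_fm r) (All_row b (iff_fm (rectangle_le_fm s c b (Suc b)) (Le (Var b) (Var r))))"

lemma sat_nth_part_fm [simp]:
  assumes "partition_env e" "s < b" "c < b" "r < b"
  shows "sat e (nth_part_fm s c r b) \<longleftrightarrow>
    is_row (e r) \<and> 1 \<le> length (e c) \<and> row_value (e r) = nth_part (e s) (length (e c))"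
proof -
  let ?c = "length (e c)" and ?p = "nth_part (e s) (length (e c))"
  have "sat e (nth_part_fm s c r b) \<longleftrightarrow> is_row (e r) \<and>
      (\<forall>n. (?c = 0 \<or> n \<le> ?p) \<longleftrightarrow> n \<le> row_value (e r))"
    using assms by (simp add: nth_part_fm_def cong: conj_cong)
  moreover have "(\<forall>n. (?c = 0 \<or> n \<le> ?p) \<longleftrightarrow> n \<le> m) \<longleftrightarrow> 1 \<le> ?c \<and> m = ?p" for m
  proof
    assume h: "\<forall>n. (?c = 0 \<or> n \<le> ?p) \<longleftrightarrow> n \<le> m"
    have "\<not> (?c = 0 \<or> Suc m \<le> ?p)" using h[rule_format, of "Suc m"] by simp
    moreover have "?c = 0 \<or> m \<le> ?p" using h[rule_format, of m] by simp
    ultimately show "1 \<le> ?c \<and> m = ?p" by (simp add: Suc_le_eq)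
  qed auto
  ultimately show ?thesis by simp
qed

subsection \<open>Recurrences along a partition\<close>

definition solves_recurrence :: "(nat \<Rightarrow> nat \<Rightarrow> nat) \<Rightarrow> nat list \<Rightarrow> bool" where
  "solves_recurrence f x \<longleftrightarrow>
     (\<forall>j. 1 \<le> j \<longrightarrow> j < length x \<longrightarrow> nth_part x j = f j (nth_part x (Suc j)))"

text \<open>
  backward_iter f L s k is the term x_(L-k) of the sequence given by x_L = s and
  x_j = f j x_(j+1).
\<close>

primrec backward_iter :: "(nat \<Rightarrow> nat \<Rightarrow> nat) \<Rightarrow> nat \<Rightarrow> nat \<Rightarrow> nat \<Rightarrow> nat" where
  "backward_iter f L s 0 = s"
| "backward_iter f L s (Suc k) = f (L - Suc k) (backward_iter f L s k)"

lemma backward_iter_mono: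
  assumes mono: "\<And>j u. u \<le> f j u"
  shows "k \<le> k' \<Longrightarrow> backward_iter f L s k \<le> backward_iter f L s k'"
proof (induction k')
  case (Suc k')
  show ?case
  proof (cases "k = Suc k'")
    case False
    then have "backward_iter f L s k \<le> backward_iter f L s k'" using Suc by simp
    also have "\<dots> \<le> backward_iter f L s (Suc k')" using mono by simp
    finally show ?thesis .
  qed simp
qed simp

lemma recurrence_unique:
  assumes rec: "solves_recurrence f x"
  shows "k < length x \<Longrightarrow>
    nth_part x (length x - k) = backward_iter f (length x) (nth_part x (length x)) k"
proof (induction k)
  case (Suc k)
  define j where "j = length x - Suc k"
  have j: "1 \<le> j" "j < length x" "Suc j = length x - k"
    using Suc.prems by (auto simp: j_def)
  then have "nth_part x j = f j (nth_part x (length x - k))"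
    using rec unfolding solves_recurrence_def by metis
  then show ?case using Suc j by (simp add: j_def)
qed simp

definition backward_seq :: "(nat \<Rightarrow> nat \<Rightarrow> nat) \<Rightarrow> nat \<Rightarrow> nat \<Rightarrow> nat list" where
  "backward_seq f L s = map (\<lambda>i. backward_iter f L s (L - 1 - i)) [0..<L]"

lemma length_backward_seq [simp]: "length (backward_seq f L s) = L"
  by (simp add: backward_seq_def)

lemma nth_part_backward_seq:
  assumes "1 \<le> j" "j \<le> L"
  shows "nth_part (backward_seq f L s) j = backward_iter f L s (L - j)"
proof -
  have "[0..<L] ! (j - 1) = j - 1" using assms by simp
  then show ?thesis using assms by (simp add: nth_part_def backward_seq_def)
qed

lemma solves_recurrence_backward_seq: "solves_recurrence f (backward_seq f L s)"
proof -
  have "backward_iter f L s (L - j) = f j (backward_iter f L s (L - Suc j))" if "j < L" for j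
  proof -
    have "L - j = Suc (L - Suc j)" "L - Suc (L - Suc j) = j" using that by simp_all
    then show ?thesis by simp
  qed
  then show ?thesis by (simp add: solves_recurrence_def nth_part_backward_seq)
qed

lemma is_partition_backward_seq:
  assumes mono: "\<And>j u. u \<le> f j u" and "1 \<le> s"
  shows "is_partition (backward_seq f L s)"
proof -
  have pos: "0 < backward_iter f L s k" for k
    using backward_iter_mono[where f = f and L = L and s = s and k = 0 and k' = k, OF mono] assms(2)
    by simp
  show ?thesis
    unfolding is_partition_def sorted_wrt_iff_nth_less
    by (auto simp: backward_seq_def pos intro!: backward_iter_mono[where f = f, OF mono])
qed

lemma recurrence_solution_iff:
  assumes "\<And>j u. u \<le> f j u" and "1 \<le> s" "1 \<le> L"
  shows "(\<exists>x. is_partition x \<and> length x = L \<and> s = nth_part x L \<and> solves_recurrence f x \<and>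
            r = nth_part x 1) \<longleftrightarrow> r = backward_iter f L s (L - 1)"
proof
  assume "\<exists>x. is_partition x \<and> length x = L \<and> s = nth_part x L \<and> solves_recurrence f x \<and>
            r = nth_part x 1"
  then show "r = backward_iter f L s (L - 1)"
    using recurrence_unique[of f _ "L - 1"] \<open>1 \<le> L\<close> by fastforce
next
  assume "r = backward_iter f L s (L - 1)"
  then show "\<exists>x. is_partition x \<and> length x = L \<and> s = nth_part x L \<and> solves_recurrence f x \<and>
            r = nth_part x 1"
    using assms is_partition_backward_seq solves_recurrence_backward_seq
    by (intro exI[of _ "backward_seq f L s"]) (simp add: nth_part_backward_seq)
qed

text \<open>
  Step formulas may
  mention variables below b other than i, u, v (such as a fixed summand), so only environments
  agreeing with e below b are considered.
\<close>

definition defines_step :: "(nat \<Rightarrow> nat \<Rightarrow> nat \<Rightarrow> nat \<Rightarrow> fm) \<Rightarrow> (nat \<Rightarrow> nat \<Rightarrow> nat) \<Rightarrow>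
    (nat \<Rightarrow> nat list) \<Rightarrow> nat \<Rightarrow> nat \<Rightarrow> bool" where
  "defines_step R f e b N \<longleftrightarrow> (\<forall>e' i u v c.
     partition_env e' \<and> (\<forall>w<b. e' w = e w) \<and> b \<le> c \<and> i < c \<and> u < c \<and> v < c \<and>
     is_column (e' i) \<and> is_row (e' u) \<and> is_row (e' v) \<and> 1 \<le> length (e' i) \<and> length (e' i) < N \<longrightarrow>
     (sat e' (R i u v c) \<longleftrightarrow> row_value (e' v) = f (length (e' i)) (row_value (e' u))))"

lemma defines_stepD:
  "defines_step R f e b N \<Longrightarrow> partition_env e' \<Longrightarrow> \<forall>w<b. e' w = e w \<Longrightarrow> b \<le> c \<Longrightarrow>
    i < c \<Longrightarrow> u < c \<Longrightarrow> v < c \<Longrightarrow> is_column (e' i) \<Longrightarrow> is_row (e' u) \<Longrightarrow> is_row (e' v) \<Longrightarrow>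
    1 \<le> length (e' i) \<Longrightarrow> length (e' i) < N \<Longrightarrow>
    sat e' (R i u v c) \<longleftrightarrow> row_value (e' v) = f (length (e' i)) (row_value (e' u))"
  unfolding defines_step_def
  by (erule allE[of _ e'], erule allE[of _ i], erule allE[of _ u], erule allE[of _ v],
      erule allE[of _ c]) simp

lemma defines_step_upd:
  assumes R: "defines_step R f e b N" and "b \<le> b'" "\<forall>w<b. e' w = e w"
  shows "defines_step R f e' b' N"
  unfolding defines_step_def
proof (intro allI impI)
  fix e'' i u v c
  assume h: "partition_env e'' \<and> (\<forall>w<b'. e'' w = e' w) \<and> b' \<le> c \<and> i < c \<and> u < c \<and> v < c \<and>
    is_column (e'' i) \<and> is_row (e'' u) \<and> is_row (e'' v) \<and> 1 \<le> length (e'' i) \<and> length (e'' i) < N"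
  then have "\<forall>w<b. e'' w = e w" "b \<le> c" using assms(2,3) by auto
  then show "sat e'' (R i u v c) \<longleftrightarrow> row_value (e'' v) = f (length (e'' i)) (row_value (e'' u))"
    using h by (simp add: defines_stepD[OF R])
qed

definition recurrence_fm ::
    "nat \<Rightarrow> nat \<Rightarrow> nat \<Rightarrow> (nat \<Rightarrow> nat \<Rightarrow> nat \<Rightarrow> nat \<Rightarrow> fm) \<Rightarrow> nat \<Rightarrow> fm" where
  "recurrence_fm x L s R b = Conj (length_eq_fm x L b) (Conj (nth_part_fm x L s b)
     (All_column b (All_column (b + 1) (All_row (b + 2) (All_row (b + 3) (Imp
        (Conj (column_succ_fm b (b + 1) (b + 4)) (Conj (Le (Var (b + 1)) (Var L))
           (Conj (nth_part_fm x (b + 1) (b + 2) (b + 4)) (nth_part_fm x b (b + 3) (b + 4)))))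
        (R b (b + 2) (b + 3) (b + 4))))))))"

lemma sat_recurrence_fm:
  assumes e: "partition_env e" and "x < b" "L < b" "s < b"
    and R: "defines_step R f e b (length (e L))"
  shows "sat e (recurrence_fm x L s R b) \<longleftrightarrow>
    length (e x) = length (e L) \<and> is_row (e s) \<and> 1 \<le> length (e L) \<and>
    row_value (e s) = nth_part (e x) (length (e L)) \<and> solves_recurrence f (e x)"
proof -
  have step: "sat (e(b := replicate n (Suc 0), Suc b := Suc 0 # replicate n (Suc 0),
      Suc (Suc b) := single_part p, b + 3 := single_part q)) (R b (Suc (Suc b)) (b + 3) (b + 4))
      \<longleftrightarrow> q = f n p"
    if "1 \<le> n" "n < length (e L)" for n p q
    using defines_stepD[OF R, where e' = "e(b := replicate n (Suc 0),
        Suc b := Suc 0 # replicate n (Suc 0), Suc (Suc b) := single_part p, b + 3 := single_part q)"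
        and i = b and c = "b + 4" and u = "Suc (Suc b)" and v = "b + 3"]
      that e by simp
  show ?thesis
    using assms by (auto simp: recurrence_fm_def solves_recurrence_def step)
qed

definition iterate_fm ::
    "nat \<Rightarrow> nat \<Rightarrow> nat \<Rightarrow> (nat \<Rightarrow> nat \<Rightarrow> nat \<Rightarrow> nat \<Rightarrow> fm) \<Rightarrow> nat \<Rightarrow> fm" where
  "iterate_fm L s r R b = Ex b (Conj (recurrence_fm b L s R (Suc b))
      (Ex (Suc b) (Conj (unit_fm (Suc b) (Suc (Suc b))) (nth_part_fm b (Suc b) r (Suc (Suc b))))))"

lemma sat_iterate_fm_iff_solution:
  assumes "partition_env e" "L < b" "s < b" "r < b" "is_row (e s)" "is_row (e r)"
    and R: "defines_step R f e b (length (e L))"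
  shows "sat e (iterate_fm L s r R b) \<longleftrightarrow> 1 \<le> length (e L) \<and>
    (\<exists>x. is_partition x \<and> length x = length (e L) \<and> row_value (e s) = nth_part x (length (e L)) \<and>
      solves_recurrence f x \<and> row_value (e r) = nth_part x 1)"
proof -
  have "defines_step R f (e(b := x)) (Suc b) (length (e L))" for x
    using defines_step_upd[OF R] by simp
  then have "sat (e(b := x)) (recurrence_fm b L s R (Suc b)) \<longleftrightarrow>
      length x = length (e L) \<and> 1 \<le> length (e L) \<and> row_value (e s) = nth_part x (length (e L)) \<and>
      solves_recurrence f x" if "is_partition x" for x
    using sat_recurrence_fm[where e = "e(b := x)" and x = b and b = "Suc b" and L = L and s = s
        and R = R and f = f] that assms by simp
  moreover have "sat e (iterate_fm L s r R b) \<longleftrightarrow>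
      (\<exists>x. is_partition x \<and> sat (e(b := x)) (recurrence_fm b L s R (Suc b)) \<and>
        row_value (e r) = nth_part x 1)"
    using assms by (simp add: iterate_fm_def cong: conj_cong)
  ultimately show ?thesis by auto
qed

lemma sat_iterate_fm:
  assumes "partition_env e" "L < b" "s < b" "r < b"
    and "is_row (e s)" "1 \<le> row_value (e s)" "is_row (e r)"
    and mono: "\<And>j u. u \<le> f j u" and R: "defines_step R f e b (length (e L))"
  shows "sat e (iterate_fm L s r R b) \<longleftrightarrow>
    1 \<le> length (e L) \<and>
    row_value (e r) = backward_iter f (length (e L)) (row_value (e s)) (length (e L) - 1)"
proof -
  have "(\<exists>x. is_partition x \<and> length x = length (e L) \<and>
        row_value (e s) = nth_part x (length (e L)) \<and> solves_recurrence f x \<and>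
        row_value (e r) = nth_part x 1) \<longleftrightarrow>
      row_value (e r) = backward_iter f (length (e L)) (row_value (e s)) (length (e L) - 1)"
    if "1 \<le> length (e L)"
    using recurrence_solution_iff[OF mono \<open>1 \<le> row_value (e s)\<close> that] .
  then show ?thesis
    using sat_iterate_fm_iff_solution[OF assms(1-5,7) R]
    by blast
qed

subsection \<open>Arithmetic on rows\<close>

lemma backward_iter_succ: "backward_iter (\<lambda>_ u. Suc u) N x k = x + k"
  by (induction k) auto

lemma backward_iter_add: "backward_iter (\<lambda>_ u. a + u) N x k = x + k * a"
  by (induction k) auto

lemma backward_iter_double: "backward_iter (\<lambda>_ u. u + u) N x k = x * 2 ^ k"
  by (induction k) auto

definition succ_step :: "nat \<Rightarrow> nat \<Rightarrow> nat \<Rightarrow> nat \<Rightarrow> fm" where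
  "succ_step i u v c = row_succ_fm u v c"

lemma defines_step_succ: "defines_step succ_step (\<lambda>_ u. Suc u) e b N"
  by (simp add: defines_step_def succ_step_def)

lemma sat_iterate_succ [simp]:
  assumes "partition_env e" "L < b" "s < b" "r < b"
    and "is_row (e s)" "1 \<le> row_value (e s)" "is_row (e r)"
  shows "sat e (iterate_fm L s r succ_step b) \<longleftrightarrow>
    1 \<le> length (e L) \<and> row_value (e r) = row_value (e s) + (length (e L) - 1)"
  using sat_iterate_fm[OF assms _ defines_step_succ] by (simp add: backward_iter_succ)

definition row_of_length_fm :: "nat \<Rightarrow> nat \<Rightarrow> nat \<Rightarrow> fm" where
  "row_of_length_fm r L b = Ex b (Conj (unit_fm b (Suc b)) (iterate_fm L b r succ_step (Suc b)))"

lemma sat_row_of_length_fm [simp]: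
  assumes "partition_env e" "r < b" "L < b" "is_row (e r)"
  shows "sat e (row_of_length_fm r L b) \<longleftrightarrow> 1 \<le> length (e L) \<and> row_value (e r) = length (e L)"
  using assms by (auto simp: row_of_length_fm_def cong: conj_cong)

lemma row_eq_Nil_iff: "is_partition x \<Longrightarrow> is_row x \<Longrightarrow> x = [] \<longleftrightarrow> row_value x = 0"
  by (metis row_eq_single_part single_part_row(2) single_part_def)

lemma row_eq_unit_iff: "is_partition x \<Longrightarrow> is_row x \<Longrightarrow> x = [Suc 0] \<longleftrightarrow> row_value x = 1"
  by (metis row_eq_single_part single_part_row(2) single_part_def One_nat_def one_neq_zero)

text \<open>For y \<noteq> 0, z = (a + 1) + (y - 1) is reached by y - 1 successor steps.\<close>

definition add_fm :: "nat \<Rightarrow> nat \<Rightarrow> nat \<Rightarrow> nat \<Rightarrow> fm" where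
  "add_fm a y z b = Disj (Conj (empty_fm y b) (Eq (Var z) (Var a)))
     (Conj (Neg (empty_fm y b)) (Ex_column b (Conj (row_of_length_fm y b (Suc b))
        (Ex_row (Suc b) (Conj (row_succ_fm a (Suc b) (Suc (Suc b)))
          (iterate_fm b (Suc b) z succ_step (Suc (Suc b))))))))"

lemma sat_add_fm [simp]:
  assumes "partition_env e" "a < b" "y < b" "z < b" "is_row (e a)" "is_row (e y)" "is_row (e z)"
  shows "sat e (add_fm a y z b) \<longleftrightarrow> row_value (e z) = row_value (e a) + row_value (e y)"
proof (cases "row_value (e y) = 0")
  case True
  then show ?thesis using assms by (simp add: add_fm_def rows_eq_iff row_eq_Nil_iff)
next
  case False
  then have "sat e (add_fm a y z b) \<longleftrightarrow>
      (\<exists>n. 1 \<le> n \<and> row_value (e y) = n \<and> row_value (e z) = Suc (row_value (e a)) + (n - 1))"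
    using assms by (simp add: add_fm_def row_eq_Nil_iff cong: conj_cong)
  then show ?thesis using False by auto
qed

definition add_step :: "nat \<Rightarrow> nat \<Rightarrow> nat \<Rightarrow> nat \<Rightarrow> nat \<Rightarrow> fm" where
  "add_step a i u v c = add_fm a u v c"

lemma defines_step_add:
  "a < b \<Longrightarrow> is_row (e a) \<Longrightarrow> defines_step (add_step a) (\<lambda>_ u. row_value (e a) + u) e b N"
  by (auto simp: defines_step_def add_step_def dest: spec[of _ a])

text \<open>For a, y \<noteq> 0, z = a + (y - 1) a is reached by y - 1 steps adding a.\<close>

definition mult_fm :: "nat \<Rightarrow> nat \<Rightarrow> nat \<Rightarrow> nat \<Rightarrow> fm" where
  "mult_fm a y z b = Disj (Conj (Disj (empty_fm a b) (empty_fm y b)) (empty_fm z b))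
     (Conj (Neg (empty_fm a b)) (Conj (Neg (empty_fm y b))
        (Ex_column b (Conj (row_of_length_fm y b (Suc b))
          (iterate_fm b a z (add_step a) (Suc b))))))"

lemma sat_mult_fm [simp]:
  assumes "partition_env e" "a < b" "y < b" "z < b" "is_row (e a)" "is_row (e y)" "is_row (e z)"
  shows "sat e (mult_fm a y z b) \<longleftrightarrow> row_value (e z) = row_value (e a) * row_value (e y)"
proof (cases "row_value (e a) = 0 \<or> row_value (e y) = 0")
  case True
  then show ?thesis using assms by (auto simp: mult_fm_def row_eq_Nil_iff)
next
  case False
  have "sat (e(b := replicate n (Suc 0))) (iterate_fm b a z (add_step a) (Suc b)) \<longleftrightarrow>
      1 \<le> n \<and> row_value (e z) = row_value (e a) + (n - 1) * row_value (e a)" for n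
    using sat_iterate_fm[where e = "e(b := replicate n (Suc 0))" and b = "Suc b",
        OF _ _ _ _ _ _ _ _ defines_step_add] False assms by (simp add: backward_iter_add)
  then have "sat e (mult_fm a y z b) \<longleftrightarrow>
      (\<exists>n. 1 \<le> n \<and> row_value (e y) = n \<and>
        row_value (e z) = row_value (e a) + (n - 1) * row_value (e a))"
    using assms False by (simp add: mult_fm_def row_eq_Nil_iff cong: conj_cong)
  then show ?thesis using False by (cases "row_value (e y)") (auto simp: algebra_simps)
qed

subsection \<open>Primes and the n-th prime\<close>

lemma prime_nat_iff_factors:
  "prime (p::nat) \<longleftrightarrow> p \<noteq> 0 \<and> p \<noteq> 1 \<and> (\<forall>m n. p = m * n \<longrightarrow> m = 1 \<or> n = 1)"
proof
  assume p: "prime p"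
  show "p \<noteq> 0 \<and> p \<noteq> 1 \<and> (\<forall>m n. p = m * n \<longrightarrow> m = 1 \<or> n = 1)"
  proof (intro conjI allI impI)
    fix m n assume "p = m * n"
    then have "m dvd p" by simp
    then have "m = 1 \<or> m = p" using p by (simp add: prime_nat_iff)
    then show "m = 1 \<or> n = 1" using \<open>p = m * n\<close> p by auto
  qed (use p in auto)
next
  assume h: "p \<noteq> 0 \<and> p \<noteq> 1 \<and> (\<forall>m n. p = m * n \<longrightarrow> m = 1 \<or> n = 1)"
  show "prime p" unfolding prime_nat_iff
  proof (intro conjI allI impI)
    show "1 < p" using h by simp
    fix m assume "m dvd p"
    then obtain k where "p = m * k" by auto
    then show "m = 1 \<or> m = p" using h by auto
  qed
qed

lemma single_part_eq_unit_iff [simp]: "single_part n = [Suc 0] \<longleftrightarrow> n = 1"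
  by (simp add: single_part_def)

definition prime_fm :: "nat \<Rightarrow> nat \<Rightarrow> fm" where
  "prime_fm q b = Conj (row_fm q) (Conj (Neg (empty_fm q b)) (Conj (Neg (unit_fm q b))
     (All_row b (All_row (Suc b) (Imp (mult_fm b (Suc b) q (Suc (Suc b)))
        (Disj (unit_fm b (Suc (Suc b))) (unit_fm (Suc b) (Suc (Suc b)))))))))"

lemma sat_prime_fm [simp]:
  assumes "partition_env e" "q < b"
  shows "sat e (prime_fm q b) \<longleftrightarrow> is_row (e q) \<and> prime (row_value (e q))"
proof -
  have "sat e (prime_fm q b) \<longleftrightarrow> is_row (e q) \<and> row_value (e q) \<noteq> 0 \<and> row_value (e q) \<noteq> 1 \<and>
      (\<forall>m n. row_value (e q) = m * n \<longrightarrow> m = 1 \<or> n = 1)"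
    using assms by (simp add: prime_fm_def row_eq_Nil_iff row_eq_unit_iff cong: conj_cong)
  then show ?thesis by (simp add: prime_nat_iff_factors)
qed

lemma in_set_iff_nth_part:
  assumes "is_partition y"
  shows "a \<in> set y \<longleftrightarrow> 0 < a \<and> (\<exists>n. 1 \<le> n \<and> nth_part y n = a)"
proof
  assume "a \<in> set y"
  then obtain i where "i < length y" "y ! i = a" by (auto simp: in_set_conv_nth)
  then show "0 < a \<and> (\<exists>n. 1 \<le> n \<and> nth_part y n = a)"
    using partition_pos[OF assms] by (intro conjI exI[of _ "Suc i"]) (auto simp: nth_part_def)
next
  assume "0 < a \<and> (\<exists>n. 1 \<le> n \<and> nth_part y n = a)"
  then obtain n where "1 \<le> n" "n \<le> length y" "y ! (n - 1) = a"
    by (auto simp: nth_part_def split: if_splits)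
  then show "a \<in> set y" using nth_mem[of "n - 1" y] by simp
qed

lemma ball_set_iff_nth_part:
  assumes "is_partition y"
  shows "(\<forall>a\<in>set y. P a) \<longleftrightarrow> (\<forall>n. 1 \<le> n \<and> 0 < nth_part y n \<longrightarrow> P (nth_part y n))"
  by (auto simp: Ball_def in_set_iff_nth_part[OF assms])

lemma distinct_iff_nth_part:
  assumes "is_partition y"
  shows "distinct y \<longleftrightarrow>
    (\<forall>n n'. 1 \<le> n \<longrightarrow> 1 \<le> n' \<longrightarrow> 0 < nth_part y n \<longrightarrow> nth_part y n = nth_part y n' \<longrightarrow> n = n')"
proof
  assume d: "distinct y"
  show "\<forall>n n'. 1 \<le> n \<longrightarrow> 1 \<le> n' \<longrightarrow> 0 < nth_part y n \<longrightarrow> nth_part y n = nth_part y n' \<longrightarrow> n = n'"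
  proof (intro allI impI)
    fix n n' assume h: "1 \<le> n" "1 \<le> n'" "0 < nth_part y n" "nth_part y n = nth_part y n'"
    then have "n \<le> length y" "n' \<le> length y" by (auto simp: nth_part_def split: if_splits)
    then have "y ! (n - 1) = y ! (n' - 1)" using h by (simp add: nth_part_def)
    then show "n = n'" using d h \<open>n \<le> length y\<close> \<open>n' \<le> length y\<close> by (simp add: nth_eq_iff_index_eq)
  qed
next
  assume r: "\<forall>n n'. 1 \<le> n \<longrightarrow> 1 \<le> n' \<longrightarrow> 0 < nth_part y n \<longrightarrow> nth_part y n = nth_part y n' \<longrightarrow> n = n'"
  show "distinct y" unfolding distinct_conv_nth
  proof (intro allI impI)
    fix i j assume "i < length y" "j < length y" "i \<noteq> j"
    then show "y ! i \<noteq> y ! j"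
      using r[rule_format, of "Suc i" "Suc j"] partition_pos[OF assms, of i]
      by (auto simp: nth_part_def)
  qed
qed

lemma ex_distinct_partition_iff:
  assumes "finite P" "0 \<notin> P"
  shows "(\<exists>y. is_partition y \<and> set y = P \<and> distinct y \<and> Q (length y)) \<longleftrightarrow> Q (card P)"
proof
  assume "\<exists>y. is_partition y \<and> set y = P \<and> distinct y \<and> Q (length y)"
  then show "Q (card P)" using distinct_card by fastforce
next
  assume Q: "Q (card P)"
  define y where "y = rev (sorted_list_of_set P)"
  have "sorted_wrt (\<ge>) y"
    by (simp add: y_def sorted_wrt_rev)
  then have "is_partition y"
    using assms by (auto simp: is_partition_def y_def intro: gr0I)
  then show "\<exists>y. is_partition y \<and> set y = P \<and> distinct y \<and> Q (length y)"
    using assms Q by (intro exI[of _ y]) (simp add: y_def distinct_card)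
qed

definition parts_primes_below_fm :: "nat \<Rightarrow> nat \<Rightarrow> nat \<Rightarrow> fm" where
  "parts_primes_below_fm y q b =
     All_column b (All_row (Suc b)
       (Imp (Conj (nth_part_fm y b (Suc b) (Suc (Suc b))) (Neg (empty_fm (Suc b) (Suc (Suc b)))))
          (Conj (prime_fm (Suc b) (Suc (Suc b))) (less_fm (Suc b) q))))"

lemma sat_parts_primes_below_fm [simp]:
  assumes "partition_env e" "y < b" "q < b" "is_row (e q)"
  shows "sat e (parts_primes_below_fm y q b) \<longleftrightarrow> (\<forall>a\<in>set (e y). prime a \<and> a < row_value (e q))"
proof -
  have "sat e (parts_primes_below_fm y q b) \<longleftrightarrow> (\<forall>n. 1 \<le> n \<and> 0 < nth_part (e y) n \<longrightarrow>
      prime (nth_part (e y) n) \<and> nth_part (e y) n < row_value (e q))"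
    using assms by (auto simp: parts_primes_below_fm_def young_le_rows rows_eq_iff)
  then show ?thesis using ball_set_iff_nth_part[of "e y"] assms by simp
qed

definition primes_below_in_parts_fm :: "nat \<Rightarrow> nat \<Rightarrow> nat \<Rightarrow> fm" where
  "primes_below_in_parts_fm y q b =
     All_row b (Imp (Conj (prime_fm b (Suc b)) (less_fm b q))
       (Ex_column (Suc b) (nth_part_fm y (Suc b) b (Suc (Suc b)))))"

lemma sat_primes_below_in_parts_fm [simp]:
  assumes "partition_env e" "y < b" "q < b" "is_row (e q)"
  shows "sat e (primes_below_in_parts_fm y q b) \<longleftrightarrow>
    (\<forall>a. prime a \<and> a < row_value (e q) \<longrightarrow> a \<in> set (e y))"
  using assms prime_gt_0_nat
  by (auto simp: primes_below_in_parts_fm_def in_set_iff_nth_part young_le_rows rows_eq_iff)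

definition parts_eq_primes_below_fm :: "nat \<Rightarrow> nat \<Rightarrow> nat \<Rightarrow> fm" where
  "parts_eq_primes_below_fm y q b =
     Conj (parts_primes_below_fm y q b) (primes_below_in_parts_fm y q b)"

lemma sat_parts_eq_primes_below_fm [simp]:
  assumes "partition_env e" "y < b" "q < b" "is_row (e q)"
  shows "sat e (parts_eq_primes_below_fm y q b) \<longleftrightarrow> set (e y) = {p. prime p \<and> p < row_value (e q)}"
  using assms by (auto simp: parts_eq_primes_below_fm_def)

definition parts_distinct_fm :: "nat \<Rightarrow> nat \<Rightarrow> fm" where
  "parts_distinct_fm y b =
     All_column b (All_column (Suc b) (All_row (b + 2)
       (Imp (Conj (nth_part_fm y b (b + 2) (b + 3))
          (Conj (nth_part_fm y (Suc b) (b + 2) (b + 3)) (Neg (empty_fm (b + 2) (b + 3)))))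
        (Eq (Var b) (Var (Suc b))))))"

lemma sat_parts_distinct_fm [simp]:
  assumes "partition_env e" "y < b"
  shows "sat e (parts_distinct_fm y b) \<longleftrightarrow> distinct (e y)"
  using assms by (auto simp: parts_distinct_fm_def distinct_iff_nth_part)

lemma card_less_enumerate:
  assumes inf: "infinite (S::nat set)"
  shows "card {p \<in> S. p < enumerate S n} = n"
proof -
  have "{p \<in> S. p < enumerate S n} = enumerate S ` {..<n}"
  proof
    show "{p \<in> S. p < enumerate S n} \<subseteq> enumerate S ` {..<n}"
    proof
      fix p assume p: "p \<in> {p \<in> S. p < enumerate S n}"
      then obtain k where k: "enumerate S k = p" using enumerate_Ex[OF inf] by blast
      then have "k < n" using p inf by auto
      then show "p \<in> enumerate S ` {..<n}" using k by auto
    qed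
    show "enumerate S ` {..<n} \<subseteq> {p \<in> S. p < enumerate S n}"
      using inf by (auto intro: enumerate_in_set)
  qed
  moreover have "inj_on (enumerate S) {..<n}"
    using inj_enumerate[OF inf] by (simp add: inj_on_def inj_def)
  ultimately show ?thesis by (simp add: card_image)
qed

lemma nth_prime_iff_card:
  assumes "1 \<le> n"
  shows "prime q \<and> n = Suc (card {p. prime p \<and> p < q}) \<longleftrightarrow> q = nth_prime n"
proof -
  let ?S = "{p::nat. prime p}"
  have inf: "infinite ?S" by (rule primes_infinite)
  have card: "card {p. prime p \<and> p < enumerate ?S k} = k" for k
    using card_less_enumerate[OF inf, of k] by simp
  show ?thesis
  proof
    assume q: "prime q \<and> n = Suc (card {p. prime p \<and> p < q})"
    then obtain k where k: "enumerate ?S k = q" using enumerate_Ex[OF inf, of q] by auto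
    then have "n - 1 = k" using q card[of k] by auto
    then show "q = nth_prime n" using k by (simp add: nth_prime_def)
  next
    assume "q = nth_prime n"
    then have q: "q = enumerate ?S (n - 1)" by (simp add: nth_prime_def)
    then have "prime q" using enumerate_in_set[OF inf] by auto
    then show "prime q \<and> n = Suc (card {p. prime p \<and> p < q})" using card[of "n - 1"] q assms by simp
  qed
qed

lemma prime_nth_prime: "prime (nth_prime n)"
  using enumerate_in_set[OF primes_infinite] by (simp add: nth_prime_def)

text \<open>
  q = p_n iff q is prime and some partition lists the primes below q, each once, in n - 1
  parts.
\<close>

definition nth_prime_fm :: "nat \<Rightarrow> nat \<Rightarrow> nat \<Rightarrow> fm" where
  "nth_prime_fm n q b = Conj (prime_fm q b)
     (Ex b (Conj (parts_eq_primes_below_fm b q (Suc b)) (Conj (parts_distinct_fm b (Suc b))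
       (Ex_column (Suc b) (Conj (length_eq_fm b (Suc b) (b + 2))
         (Ex_column (b + 2) (Conj (column_succ_fm (Suc b) (b + 2) (b + 3))
           (row_of_length_fm n (b + 2) (b + 3)))))))))"

lemma sat_nth_prime_fm [simp]:
  assumes "partition_env e" "n < b" "q < b" "is_row (e n)"
  shows "sat e (nth_prime_fm n q b) \<longleftrightarrow>
    is_row (e q) \<and> 1 \<le> row_value (e n) \<and> row_value (e q) = nth_prime (row_value (e n))"
proof -
  let ?P = "{p. prime p \<and> p < row_value (e q)}"
  have "finite ?P" "0 \<notin> ?P" by auto
  then have primes_below: "(\<exists>y. is_partition y \<and> set y = ?P \<and> distinct y \<and>
      row_value (e n) = Suc (length y)) \<longleftrightarrow> row_value (e n) = Suc (card ?P)"
    by (rule ex_distinct_partition_iff)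
  have "sat e (nth_prime_fm n q b) \<longleftrightarrow> is_row (e q) \<and> prime (row_value (e q)) \<and>
      (\<exists>y. is_partition y \<and> set y = ?P \<and> distinct y \<and> row_value (e n) = Suc (length y))"
    using assms by (simp add: nth_prime_fm_def cong: conj_cong)
  also have "\<dots> \<longleftrightarrow> is_row (e q) \<and> prime (row_value (e q)) \<and> row_value (e n) = Suc (card ?P)"
    by (simp only: primes_below)
  also have "\<dots> \<longleftrightarrow> is_row (e q) \<and> 1 \<le> row_value (e n) \<and> row_value (e q) = nth_prime (row_value (e n))"
  proof (cases "1 \<le> row_value (e n)")
    case True
    then show ?thesis using nth_prime_iff_card[OF True, of "row_value (e q)"] by simp
  qed simp
  finally show ?thesis .
qed

subsection \<open>The graph of the code\<close>

definition double_step :: "nat \<Rightarrow> nat \<Rightarrow> nat \<Rightarrow> nat \<Rightarrow> fm" where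
  "double_step i u v c = add_fm u u v c"

lemma defines_step_double: "defines_step double_step (\<lambda>_ u. u + u) e b N"
  by (auto simp: defines_step_def double_step_def)

definition power_of_two_fm :: "nat \<Rightarrow> nat \<Rightarrow> nat \<Rightarrow> fm" where
  "power_of_two_fm x y b = Ex b (Conj (unit_fm b (Suc b)) (iterate_fm x b y double_step (Suc b)))"

lemma sat_power_of_two_fm [simp]:
  assumes "partition_env e" "x < b" "y < b" "is_row (e y)"
  shows "sat e (power_of_two_fm x y b) \<longleftrightarrow>
    1 \<le> length (e x) \<and> row_value (e y) = 2 ^ (length (e x) - 1)"
proof -
  have "sat (e(b := [Suc 0])) (iterate_fm x b y double_step (Suc b)) \<longleftrightarrow>
      1 \<le> length (e x) \<and> row_value (e y) = 2 ^ (length (e x) - 1)"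
    using sat_iterate_fm[where e = "e(b := [Suc 0])" and b = "Suc b" and L = x and s = b and r = y,
        OF _ _ _ _ _ _ _ _ defines_step_double] assms
    by (simp add: backward_iter_double)
  then show ?thesis using assms by (simp add: power_of_two_fm_def cong: conj_cong)
qed

definition prime_code_step :: "nat \<Rightarrow> nat \<Rightarrow> nat \<Rightarrow> nat \<Rightarrow> nat \<Rightarrow> fm" where
  "prime_code_step x i u v c =
     Ex_row c (Conj (nth_part_fm x i c (Suc c)) (Ex_row (Suc c)
       (Conj (nth_prime_fm c (Suc c) (Suc (Suc c))) (mult_fm (Suc c) u v (Suc (Suc c))))))"

lemma sat_prime_code_step:
  assumes "partition_env e" "x < c" "i < c" "u < c" "v < c" "is_row (e u)" "is_row (e v)"
    "1 \<le> length (e i)" "length (e i) \<le> length (e x)"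
  shows "sat e (prime_code_step x i u v c) \<longleftrightarrow>
    row_value (e v) = nth_prime (nth_part (e x) (length (e i))) * row_value (e u)"
proof -
  have "0 < nth_part (e x) (length (e i))"
    using assms partition_pos[of "e x"] by (simp add: nth_part_def)
  then show ?thesis using assms by (simp add: prime_code_step_def)
qed

lemma defines_step_prime_code:
  "x < b \<Longrightarrow>
    defines_step (prime_code_step x) (\<lambda>j u. nth_prime (nth_part (e x) j) * u) e b
      (Suc (length (e x)))"
  by (auto simp: defines_step_def sat_prime_code_step dest: spec[of _ x])

lemma backward_iter_prime_code:
  assumes "k \<le> length \<sigma>"
  shows "backward_iter (\<lambda>j u. nth_prime (nth_part \<sigma> j) * u) (Suc (length \<sigma>)) s k =
    s * prod_list (map nth_prime (drop (length \<sigma> - k) \<sigma>))"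
  using assms
proof (induction k)
  case (Suc k)
  let ?i = "length \<sigma> - Suc k"
  have i: "?i < length \<sigma>" using Suc.prems by simp
  have "drop ?i \<sigma> = \<sigma> ! ?i # drop (length \<sigma> - k) \<sigma>"
    using Cons_nth_drop_Suc[OF i] Suc.prems by (simp add: Suc_diff_Suc)
  moreover have "nth_part \<sigma> (length \<sigma> - k) = \<sigma> ! ?i"
    using Suc.prems by (simp add: nth_part_def)
  ultimately show ?case using Suc by (simp add: ac_simps)
qed simp

text \<open>The product runs along a column of length |x| + 1, whose |x| steps multiply by p_(x_j).\<close>

definition prime_code_fm :: "nat \<Rightarrow> nat \<Rightarrow> nat \<Rightarrow> fm" where
  "prime_code_fm x y b =
     Ex_column b (Conj (length_eq_fm x b (Suc b))
       (Ex_column (Suc b) (Conj (column_succ_fm b (Suc b) (b + 2))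
         (Ex (b + 2) (Conj (unit_fm (b + 2) (b + 3))
           (iterate_fm (Suc b) (b + 2) y (prime_code_step x) (b + 3)))))))"

lemma sat_prime_code_fm [simp]:
  assumes "partition_env e" "x < b" "y < b" "is_row (e y)"
  shows "sat e (prime_code_fm x y b) \<longleftrightarrow> row_value (e y) = prod_list (map nth_prime (e x))"
proof -
  let ?e = "e(b := replicate (length (e x)) (Suc 0),
    Suc b := Suc 0 # replicate (length (e x)) (Suc 0),
    b + 2 := [Suc 0])"
  have step: "defines_step (prime_code_step x) (\<lambda>j u. nth_prime (nth_part (?e x) j) * u) ?e (b + 3)
      (length (?e (Suc b)))"
    using defines_step_prime_code[of x "b + 3" ?e] assms by simp
  have "sat ?e (iterate_fm (Suc b) (b + 2) y (prime_code_step x) (b + 3)) \<longleftrightarrow>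
      row_value (e y) = prod_list (map nth_prime (e x))"
    using sat_iterate_fm[where e = ?e and b = "b + 3" and L = "Suc b" and s = "b + 2" and r = y,
        OF _ _ _ _ _ _ _ _ step] assms
      prime_gt_0_nat[OF prime_nth_prime]
    by (simp add: backward_iter_prime_code Suc_le_eq)
  then show ?thesis using assms by (simp add: prime_code_fm_def cong: conj_cong)
qed

definition code_graph_fm :: fm where
  "code_graph_fm =
     Disj (Conj (empty_fm 0 2) (empty_fm 1 2))
    (Disj (Conj (Neg (empty_fm 0 2))
            (Conj (column_fm 0 2) (Conj (row_fm 1) (power_of_two_fm 0 1 2))))
          (Conj (Neg (column_fm 0 2)) (Conj (row_fm 1) (prime_code_fm 0 1 2))))"

lemma code_eq_if:
  "code \<sigma> = (if \<sigma> = [] then 0 else if is_column \<sigma> then 2 ^ (length \<sigma> - 1)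
     else prod_list (map nth_prime \<sigma>))"
  by (simp add: code_def is_column_def)

lemma sat_code_graph_fm:
  assumes e: "partition_env e"
  shows "sat e code_graph_fm \<longleftrightarrow> e 1 = single_part (code (e 0))"
proof -
  have row_iff: "e 1 = single_part m \<longleftrightarrow> is_row (e 1) \<and> row_value (e 1) = m" for m
    using e row_eq_single_part[of "e 1"] by auto
  consider "e 0 = []" | "e 0 \<noteq> []" "is_column (e 0)" | "\<not> is_column (e 0)"
    by (auto simp: is_column_def)
  then show ?thesis
  proof cases
    case 1
    then show ?thesis
      using e by (simp add: code_graph_fm_def code_eq_if is_column_def single_part_def)
  next
    case 2
    then have "sat e code_graph_fm \<longleftrightarrow> is_row (e 1) \<and> row_value (e 1) = 2 ^ (length (e 0) - 1)"
      using e by (simp add: code_graph_fm_def Suc_le_eq cong: conj_cong)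
    then show ?thesis using 2 row_iff by (simp add: code_eq_if)
  next
    case 3
    then have "e 0 \<noteq> []" by (auto simp: is_column_def)
    then have "sat e code_graph_fm \<longleftrightarrow>
        is_row (e 1) \<and> row_value (e 1) = prod_list (map nth_prime (e 0))"
      using 3 e by (simp add: code_graph_fm_def cong: conj_cong)
    then show ?thesis using 3 row_iff \<open>e 0 \<noteq> []\<close> by (simp add: code_eq_if)
  qed
qed

named_theorems fv_subset

lemma fv_iff_fm [simp]: "fv (iff_fm \<phi> \<psi>) = fv \<phi> \<union> fv \<psi>"
  by (auto simp: iff_fm_def)

lemma fv_empty_fm [fv_subset]: "fv (empty_fm x b) \<subseteq> {x}"
  by (auto simp: empty_fm_def)

lemma fv_unit_fm [fv_subset]: "fv (unit_fm x b) \<subseteq> {x}"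
  by (auto simp: unit_fm_def empty_fm_def)

lemma fv_row_fm [fv_subset]: "fv (row_fm x) \<subseteq> {x}"
  by (auto simp: row_fm_def)

lemma fv_less_fm [fv_subset]: "fv (less_fm u v) \<subseteq> {u, v}"
  by (auto simp: less_fm_def)

lemma fv_All_row [simp]: "fv (All_row b \<phi>) = fv \<phi> - {b}"
  by (auto simp: All_row_def row_fm_def)

lemma fv_Ex_row [simp]: "fv (Ex_row b \<phi>) = fv \<phi> - {b}"
  by (auto simp: Ex_row_def row_fm_def)

lemma fv_column_fm [fv_subset]: "fv (column_fm x b) \<subseteq> {x}"
  unfolding column_fm_def by (auto dest!: fv_subset[THEN subsetD])

lemma fv_All_column [simp]: "fv (All_column b \<phi>) = fv \<phi> - {b}"
  unfolding All_column_def by (auto dest!: fv_subset[THEN subsetD])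

lemma fv_Ex_column [simp]: "fv (Ex_column b \<phi>) = fv \<phi> - {b}"
  unfolding Ex_column_def by (auto dest!: fv_subset[THEN subsetD])

lemma fv_row_succ_fm [fv_subset]: "fv (row_succ_fm u v b) \<subseteq> {u, v}"
  unfolding row_succ_fm_def by (auto dest!: fv_subset[THEN subsetD])

lemma fv_column_succ_fm [fv_subset]: "fv (column_succ_fm i j b) \<subseteq> {i, j}"
  unfolding column_succ_fm_def by (auto dest!: fv_subset[THEN subsetD])

lemma fv_length_le_fm [fv_subset]: "fv (length_le_fm y c b) \<subseteq> {y, c}"
  unfolding length_le_fm_def by (auto dest!: fv_subset[THEN subsetD])

lemma fv_length_eq_fm [fv_subset]: "fv (length_eq_fm x c b) \<subseteq> {x, c}"
  unfolding length_eq_fm_def by (auto dest!: fv_subset[THEN subsetD])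

lemma fv_parts_le_fm [fv_subset]: "fv (parts_le_fm y r b) \<subseteq> {y, r}"
  unfolding parts_le_fm_def by (auto dest!: fv_subset[THEN subsetD])

lemma fv_rectangle_le_fm [fv_subset]: "fv (rectangle_le_fm s c r b) \<subseteq> {s, c, r}"
  unfolding rectangle_le_fm_def by (auto dest!: fv_subset[THEN subsetD])

lemma fv_nth_part_fm [fv_subset]: "fv (nth_part_fm s c r b) \<subseteq> {s, c, r}"
  unfolding nth_part_fm_def by (auto dest!: fv_subset[THEN subsetD])

lemma fv_recurrence_fm:
  assumes "\<And>i u v c. fv (R i u v c) \<subseteq> insert i (insert u (insert v X))"
  shows "fv (recurrence_fm x L s R b) \<subseteq> insert x (insert L (insert s X))"
  unfolding recurrence_fm_def by (auto dest!: fv_subset[THEN subsetD] assms[THEN subsetD])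

lemma fv_iterate_fm:
  assumes "\<And>i u v c. fv (R i u v c) \<subseteq> insert i (insert u (insert v X))"
  shows "fv (iterate_fm L s r R b) \<subseteq> insert L (insert s (insert r X))"
  unfolding iterate_fm_def
  by (auto dest!: fv_subset[THEN subsetD] fv_recurrence_fm[OF assms, THEN subsetD])

lemma fv_succ_step: "fv (succ_step i u v c) \<subseteq> {i, u, v}"
  unfolding succ_step_def by (auto dest!: fv_subset[THEN subsetD])

lemmas fv_iterate_succ [fv_subset] = fv_iterate_fm[OF fv_succ_step]

lemma fv_row_of_length_fm [fv_subset]: "fv (row_of_length_fm r L b) \<subseteq> {r, L}"
  unfolding row_of_length_fm_def by (auto dest!: fv_subset[THEN subsetD])

lemma fv_add_fm [fv_subset]: "fv (add_fm a y z b) \<subseteq> {a, y, z}"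
  unfolding add_fm_def by (auto dest!: fv_subset[THEN subsetD])

lemma fv_add_step: "fv (add_step a i u v c) \<subseteq> {i, u, v, a}"
  unfolding add_step_def by (auto dest!: fv_subset[THEN subsetD])

lemmas fv_iterate_add [fv_subset] = fv_iterate_fm[OF fv_add_step]

lemma fv_mult_fm [fv_subset]: "fv (mult_fm a y z b) \<subseteq> {a, y, z}"
  unfolding mult_fm_def by (auto dest!: fv_subset[THEN subsetD])

lemma fv_prime_fm [fv_subset]: "fv (prime_fm q b) \<subseteq> {q}"
  unfolding prime_fm_def by (auto dest!: fv_subset[THEN subsetD])

lemma fv_parts_eq_primes_below_fm [fv_subset]: "fv (parts_eq_primes_below_fm y q b) \<subseteq> {y, q}"
  unfolding parts_eq_primes_below_fm_def parts_primes_below_fm_def primes_below_in_parts_fm_def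
  by (auto dest!: fv_subset[THEN subsetD])

lemma fv_parts_distinct_fm [fv_subset]: "fv (parts_distinct_fm y b) \<subseteq> {y}"
  unfolding parts_distinct_fm_def by (auto dest!: fv_subset[THEN subsetD])

lemma fv_nth_prime_fm [fv_subset]: "fv (nth_prime_fm n q b) \<subseteq> {n, q}"
  unfolding nth_prime_fm_def by (auto dest!: fv_subset[THEN subsetD])

lemma fv_double_step: "fv (double_step i u v c) \<subseteq> {i, u, v}"
  unfolding double_step_def by (auto dest!: fv_subset[THEN subsetD])

lemmas fv_iterate_double [fv_subset] = fv_iterate_fm[OF fv_double_step]

lemma fv_power_of_two_fm [fv_subset]: "fv (power_of_two_fm x y b) \<subseteq> {x, y}"
  unfolding power_of_two_fm_def by (auto dest!: fv_subset[THEN subsetD])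

lemma fv_prime_code_step: "fv (prime_code_step x i u v c) \<subseteq> {i, u, v, x}"
  unfolding prime_code_step_def by (auto dest!: fv_subset[THEN subsetD])

lemmas fv_iterate_prime_code [fv_subset] = fv_iterate_fm[OF fv_prime_code_step]

lemma fv_prime_code_fm [fv_subset]: "fv (prime_code_fm x y b) \<subseteq> {x, y}"
  unfolding prime_code_fm_def by (auto dest!: fv_subset[THEN subsetD])

lemma fv_code_graph_fm: "fv code_graph_fm \<subseteq> {0, 1}"
  unfolding code_graph_fm_def by (auto dest!: fv_subset[THEN subsetD])

theorem proposition4p3:
  shows "\<exists>\<Psi>. fv \<Psi> \<subseteq> {0, 1} \<and>
    (\<forall>e. (\<forall>v. is_partition (e v)) \<longrightarrow>
       (sat e \<Psi> \<longleftrightarrow> e 1 = single_part (code (e 0))))"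
  using fv_code_graph_fm sat_code_graph_fm by (auto simp: partition_env_def)

end
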